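(* For every positive integer $n$, \[ \sum_{w \in B_n} t^{\mathrm{fdes}(w)}q^{\mathrm{fmaj}(w)} = \Big(\sum_{u\in S_n} t^{\mathrm{des}(u)}q^{\mathrm{maj}(u)}\Big)\cdot\prod_{i=1}^n (1+tq^i).\]
   Context: $S_n$ is the set of permutations of $[n]=\{1,\dots,n\}$, written as words $u=u_1\cdots u_n$. $B_n$ is the set of signed permutations: words $w=w_1\cdots w_n$ on the alphabet $\{\bar 1,1,\dots,\bar n,n\}$ (where $\bar i=-i$) such that $|w_1|\cdots|w_n|$ is a permutation in $S_n$. The alphabet is totally ordered by $\bar 1<\bar 2<\cdots<\bar n<1<2<\cdots<n$. For a word $w$ over a totally ordered alphabet, $\mathrm{Des}(w)=\{i: w_i>w_{i+1}\}$, $\mathrm{des}(w)=|\mathrm{Des}(w)|$, and $\mathrm{maj}(w)=\sum_{i\in\mathrm{Des}(w)} i$. For $w\in B_n$: $\mathrm{fdes}(w)=2\,\mathrm{des}(w)+1$ if $w_1<0$ and $\mathrm{fdes}(w)=2\,\mathrm{des}(w)$ if $w_1>0$; $\mathrm{fmaj}(w)=2\,\mathrm{maj}(w)+|\{i:w_i<0\}|$. *)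

theory Defs
  imports Main
begin

text \<open>Words are lists; positions are 1-based as in the paper: position i (1 \<le> i < length w)
  is a descent w.r.t. the strict order lt if w_i > w_(i+1), i.e. lt (w!i) (w!(i-1)).\<close>

definition Des_wrt :: "('a \<Rightarrow> 'a \<Rightarrow> bool) \<Rightarrow> 'a list \<Rightarrow> nat set" where
  "Des_wrt lt w = {i. 1 \<le> i \<and> i < length w \<and> lt (w ! i) (w ! (i - 1))}"

definition des_wrt :: "('a \<Rightarrow> 'a \<Rightarrow> bool) \<Rightarrow> 'a list \<Rightarrow> nat" where
  "des_wrt lt w = card (Des_wrt lt w)"

definition maj_wrt :: "('a \<Rightarrow> 'a \<Rightarrow> bool) \<Rightarrow> 'a list \<Rightarrow> nat" where
  "maj_wrt lt w = (\<Sum>i\<in>Des_wrt lt w. i)"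

definition Sn :: "nat \<Rightarrow> nat list set" where
  "Sn n = {u. length u = n \<and> distinct u \<and> set u = {1..n}}"

text \<open>Signed permutations: words over nonzero integers (bar i = -i) whose absolute values
  form a permutation of [n].\<close>
definition Bn :: "nat \<Rightarrow> int list set" where
  "Bn n = {w. length w = n \<and> distinct (map abs w) \<and> set (map abs w) = {1..int n}}"

text \<open>The order bar1 < bar2 < ... < barn < 1 < 2 < ... < n on the signed alphabet.\<close>
definition sless :: "int \<Rightarrow> int \<Rightarrow> bool" where
  "sless a b = (if a < 0 \<and> b < 0 then \<bar>a\<bar> < \<bar>b\<bar> else a < b)"

definition fdes :: "int list \<Rightarrow> nat" where
  "fdes w = 2 * des_wrt sless w + (if hd w < 0 then 1 else 0)"

definition fmaj :: "int list \<Rightarrow> nat" where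
  "fmaj w = 2 * maj_wrt sless w + length (filter (\<lambda>x. x < 0) w)"

end

theory Submission
  imports Defs
begin

(* A signed permutation w is the same thing as a pair (u, e) of a permutation
   u = |w_1| ... |w_n| in S_n and a sign vector e (e_i = True iff w_i < 0).  In the signed
   order bar 1 < ... < bar n < 1 < ... < n, comparing two signed letters only depends on
   their signs and on the comparison of their absolute values (bar x < bar y iff x < y).
   Hence, fixing u and appending one letter at a time, the weight t^fdes q^fmaj of the signed
   word changes by a factor that depends only on the last two signs and on whether u has a
   descent at the new position.  Summing over the sign vectors with prescribed last sign b,
   a two-term recurrence gives
     sum over e with last e = b  =  (t q^n if b else 1) * t^des(u) q^maj(u) * prod_{i<n} (1 + t q^i),
   and adding both values of b yields t^des(u) q^maj(u) * prod_{i<=n} (1 + t q^i). *)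

section \<open>Descent statistics of a word extended by one letter\<close>

lemma finite_Des_wrt: "finite (Des_wrt lt xs)"
  unfolding Des_wrt_def by (rule finite_subset[of _ "{..<length xs}"]) auto

lemma length_notin_Des_wrt: "length xs \<notin> Des_wrt lt xs"
  unfolding Des_wrt_def by auto

lemma Des_wrt_snoc:
  "Des_wrt lt (xs @ [y]) =
     Des_wrt lt xs \<union> (if xs \<noteq> [] \<and> lt y (last xs) then {length xs} else {})"
proof (rule set_eqI)
  fix i
  consider "i < length xs" | "i = length xs" | "i > length xs" by linarith
  then show "i \<in> Des_wrt lt (xs @ [y]) \<longleftrightarrow>
      i \<in> Des_wrt lt xs \<union> (if xs \<noteq> [] \<and> lt y (last xs) then {length xs} else {})"
  proof cases
    case 2
    then show ?thesis unfolding Des_wrt_def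
      by (cases xs rule: rev_cases) (auto simp: nth_append)
  qed (auto simp: Des_wrt_def nth_append)
qed

lemma des_wrt_snoc:
  "des_wrt lt (xs @ [y]) = des_wrt lt xs + (if xs \<noteq> [] \<and> lt y (last xs) then 1 else 0)"
  unfolding des_wrt_def Des_wrt_snoc by (simp add: finite_Des_wrt length_notin_Des_wrt)

lemma maj_wrt_snoc:
  "maj_wrt lt (xs @ [y]) = maj_wrt lt xs + (if xs \<noteq> [] \<and> lt y (last xs) then length xs else 0)"
  unfolding maj_wrt_def Des_wrt_snoc by (simp add: finite_Des_wrt length_notin_Des_wrt)

lemma Des_wrt_singleton: "Des_wrt lt [x] = {}"
  unfolding Des_wrt_def by auto

section \<open>Signed words and their weights\<close>

definition sign_letter :: "bool \<Rightarrow> nat \<Rightarrow> int" where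
  "sign_letter b x = (if b then - int x else int x)"

definition signed :: "bool list \<Rightarrow> nat list \<Rightarrow> int list" where
  "signed e u = map2 sign_letter e u"

lemma length_signed: "length e = length u \<Longrightarrow> length (signed e u) = length u"
  by (simp add: signed_def)

lemma signed_snoc:
  "length e = length u \<Longrightarrow> signed (e @ [b]) (u @ [x]) = signed e u @ [sign_letter b x]"
  by (simp add: signed_def)

lemma last_signed:
  "length e = length u \<Longrightarrow> u \<noteq> [] \<Longrightarrow> last (signed e u) = sign_letter (last e) (last u)"
proof (induction e u rule: list_induct2)
  case (Cons c e y u)
  then show ?case by (cases u; cases e) (auto simp: signed_def)
qed simp

definition signed_less :: "bool \<Rightarrow> nat \<Rightarrow> bool \<Rightarrow> nat \<Rightarrow> bool" where
  "signed_less b x c y = (if b = c then x < y else b \<and> \<not> c)"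

lemma sless_sign_letter:
  "0 < x \<Longrightarrow> 0 < y \<Longrightarrow> sless (sign_letter b x) (sign_letter c y) = signed_less b x c y"
  by (auto simp: sless_def sign_letter_def signed_less_def)

definition weight :: "'a::comm_ring_1 \<Rightarrow> 'a \<Rightarrow> bool list \<Rightarrow> nat list \<Rightarrow> 'a" where
  "weight t q e u = t ^ fdes (signed e u) * q ^ fmaj (signed e u)"

text \<open>The factor by which the weight grows when the letter x with sign b is appended to a
  signed word of length k whose last letter is y with sign c: t^2 q^(2k) if a descent is
  created at position k, times q if the new letter is negative.\<close>
definition extension_factor :: "'a::comm_ring_1 \<Rightarrow> 'a \<Rightarrow> nat \<Rightarrow> bool \<Rightarrow> nat \<Rightarrow> bool \<Rightarrow> nat \<Rightarrow> 'a" where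
  "extension_factor t q k b x c y =
     (if signed_less b x c y then t^2 * q^(2 * k) else 1) * (if b then q else 1)"

lemma weight_snoc:
  assumes len: "length e = length u" and "u \<noteq> []" and "0 < x" and "0 < last u"
  shows "weight t q (e @ [b]) (u @ [x]) =
         weight t q e u * extension_factor t q (length u) b x (last e) (last u)"
proof -
  have ne: "signed e u \<noteq> []" using assms length_signed by fastforce
  have descent: "sless (sign_letter b x) (last (signed e u)) = signed_less b x (last e) (last u)"
    using assms by (simp add: last_signed sless_sign_letter)
  have neg: "length (filter (\<lambda>x. x < 0) [sign_letter b x]) = (if b then 1 else 0)"
    using \<open>0 < x\<close> by (simp add: sign_letter_def)
  have hd_eq: "hd (signed e u @ [sign_letter b x]) = hd (signed e u)"
    using ne by (cases "signed e u") auto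
  have fdes_eq: "fdes (signed (e @ [b]) (u @ [x])) =
      fdes (signed e u) + (if signed_less b x (last e) (last u) then 2 else 0)"
    unfolding fdes_def signed_snoc[OF len] des_wrt_snoc hd_eq using ne descent by auto
  have fmaj_eq: "fmaj (signed (e @ [b]) (u @ [x])) = fmaj (signed e u)
      + (if signed_less b x (last e) (last u) then 2 * length u else 0) + (if b then 1 else 0)"
    unfolding fmaj_def signed_snoc[OF len] maj_wrt_snoc
    using ne descent neg length_signed[OF len] by auto
  show ?thesis unfolding weight_def extension_factor_def fdes_eq fmaj_eq
    by (auto simp: power_add power_mult algebra_simps)
qed

lemma des_maj_weight_snoc:
  fixes t q :: "'a::comm_ring_1"
  assumes "xs \<noteq> []"
  shows "t ^ des_wrt (<) (xs @ [x]) * q ^ maj_wrt (<) (xs @ [x]) =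
         t ^ des_wrt (<) xs * q ^ maj_wrt (<) xs * (if x < last xs then t * q ^ length xs else 1)"
  unfolding des_wrt_snoc maj_wrt_snoc using assms by (auto simp: power_add algebra_simps)

section \<open>Summing over sign vectors\<close>

text \<open>The algebraic heart of the recurrence: summing the extension factor over the previous
  last sign c, weighted by its generating factor (t q^k if c is negative), factorizes.\<close>
lemma extension_factor_sum:
  fixes t q :: "'a::comm_ring_1"
  shows "extension_factor t q k b x False y + t * q ^ k * extension_factor t q k b x True y
       = (if b then t * q ^ Suc k else 1) * (if x < y then t * q ^ k else 1) * (1 + t * q ^ k)"
proof -
  have "q ^ (2 * k) = q ^ k * q ^ k" by (simp add: power_add mult_2)
  then show ?thesis unfolding extension_factor_def signed_less_def
    by (auto simp: power2_eq_square algebra_simps)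
qed

lemma sign_vectors_snoc:
  "{e. length e = Suc k \<and> last e = b} = (\<lambda>e'. e' @ [b]) ` {e'. length e' = k}"
proof (rule set_eqI, rule iffI)
  fix e assume "e \<in> {e. length e = Suc k \<and> last e = b}"
  then show "e \<in> (\<lambda>e'. e' @ [b]) ` {e'. length e' = k}"
    by (cases e rule: rev_cases) auto
qed auto

lemma finite_sign_vectors: "finite {e::bool list. length e = k \<and> P e}"
  by (rule finite_subset[OF _ finite_lists_length_eq[of "UNIV::bool set" k]]) auto

lemma sum_sign_vectors_by_last:
  assumes "0 < k"
  shows "(\<Sum>e\<in>{e::bool list. length e = k}. f e) =
         (\<Sum>e\<in>{e. length e = k \<and> last e = False}. f e) + (\<Sum>e\<in>{e. length e = k \<and> last e = True}. f e)"
proof -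
  have split: "{e::bool list. length e = k} =
        {e. length e = k \<and> last e = False} \<union> {e. length e = k \<and> last e = True}"
    by auto
  show ?thesis
    unfolding split by (rule sum.union_disjoint) (auto simp: finite_sign_vectors)
qed

text \<open>One step of the transfer recurrence: the signings of xs @ [x] with last sign b are the
  signings of xs extended by b, so their weight sum is a combination of the two sums for xs.\<close>
lemma sum_weight_snoc:
  fixes t q :: "'a::comm_ring_1"
  assumes "xs \<noteq> []" and "\<forall>y\<in>set xs. 0 < y" and "0 < x"
  shows "(\<Sum>e\<in>{e. length e = length (xs @ [x]) \<and> last e = b}. weight t q e (xs @ [x])) =
     (\<Sum>e\<in>{e. length e = length xs \<and> last e = False}. weight t q e xs) *
       extension_factor t q (length xs) b x False (last xs) +
     (\<Sum>e\<in>{e. length e = length xs \<and> last e = True}. weight t q e xs) *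
       extension_factor t q (length xs) b x True (last xs)" (is "_ = ?rhs")
proof -
  have "0 < last xs" using assms by auto
  have "(\<Sum>e\<in>{e. length e = length (xs @ [x]) \<and> last e = b}. weight t q e (xs @ [x]))
      = (\<Sum>e\<in>{e. length e = length xs}. weight t q (e @ [b]) (xs @ [x]))"
    unfolding length_append_singleton sign_vectors_snoc
    by (subst sum.reindex) (auto simp: inj_on_def)
  also have "\<dots> = (\<Sum>e\<in>{e. length e = length xs}.
                    weight t q e xs * extension_factor t q (length xs) b x (last e) (last xs))"
    using assms \<open>0 < last xs\<close> by (intro sum.cong) (auto simp: weight_snoc)
  also have "\<dots> = ?rhs"
    using assms by (simp add: sum_sign_vectors_by_last sum_distrib_right)
  finally show ?thesis .
qed

lemma sum_weight_last_sign:
  fixes t q :: "'a::comm_ring_1"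
  assumes "u \<noteq> []" and "\<forall>x\<in>set u. 0 < x"
  shows "(\<Sum>e\<in>{e. length e = length u \<and> last e = b}. weight t q e u) =
     (if b then t * q ^ length u else 1) * (t ^ des_wrt (<) u * q ^ maj_wrt (<) u) *
     (\<Prod>i=1..length u - 1. 1 + t * q ^ i)"
  using assms
proof (induction u arbitrary: b rule: rev_induct)
  case Nil
  then show ?case by simp
next
  case (snoc x xs)
  show ?case
  proof (cases "xs = []")
    case True
    have "{e::bool list. length e = length (xs @ [x]) \<and> last e = b} = {[b]}"
      using True by (auto simp: length_Suc_conv)
    then show ?thesis using True snoc.prems
      by (auto simp: weight_def fdes_def fmaj_def signed_def sign_letter_def
                     des_wrt_def maj_wrt_def Des_wrt_singleton)
  next
    case False
    define k where "k = length xs"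
    have "0 < k" using False k_def by auto
    have pos: "\<forall>y\<in>set xs. 0 < y" "0 < x" using snoc.prems by auto
    define T where "T = t ^ des_wrt (<) xs * q ^ maj_wrt (<) xs"
    define P where "P = (\<Prod>i=1..k - 1. 1 + t * q ^ i)"
    have IH: "(\<Sum>e\<in>{e. length e = k \<and> last e = c}. weight t q e xs) =
              (if c then t * q ^ k else 1) * T * P" for c
      using snoc.IH[OF False pos(1), of c] unfolding k_def T_def P_def .
    have "(\<Sum>e\<in>{e. length e = length (xs @ [x]) \<and> last e = b}. weight t q e (xs @ [x]))
        = T * P * (extension_factor t q k b x False (last xs) +
                   t * q ^ k * extension_factor t q k b x True (last xs))"
      unfolding sum_weight_snoc[OF False pos] IH[unfolded k_def] k_def by (simp add: algebra_simps)
    also have "\<dots> = (if b then t * q ^ Suc k else 1) *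
        (T * (if x < last xs then t * q ^ k else 1)) * (P * (1 + t * q ^ k))"
      by (subst extension_factor_sum) (simp add: ac_simps)
    also have "\<dots> = (if b then t * q ^ length (xs @ [x]) else 1) *
        (t ^ des_wrt (<) (xs @ [x]) * q ^ maj_wrt (<) (xs @ [x])) *
        (\<Prod>i=1..length (xs @ [x]) - 1. 1 + t * q ^ i)"
      using \<open>0 < k\<close> unfolding des_maj_weight_snoc[OF False] T_def P_def k_def
      by (cases "length xs") (auto simp: prod.cl_ivl_Suc)
    finally show ?thesis .
  qed
qed

lemma sum_weight_signings:
  fixes t q :: "'a::comm_ring_1"
  assumes "u \<noteq> []" and "\<forall>x\<in>set u. 0 < x"
  shows "(\<Sum>e\<in>{e. length e = length u}. weight t q e u) =
         (t ^ des_wrt (<) u * q ^ maj_wrt (<) u) * (\<Prod>i=1..length u. 1 + t * q ^ i)"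
proof -
  have "0 < length u" using assms by auto
  have "(\<Sum>e\<in>{e. length e = length u}. weight t q e u) =
      (t ^ des_wrt (<) u * q ^ maj_wrt (<) u) * (\<Prod>i=1..length u - 1. 1 + t * q ^ i) *
      (1 + t * q ^ length u)"
    unfolding sum_sign_vectors_by_last[OF \<open>0 < length u\<close>] sum_weight_last_sign[OF assms]
    by (simp add: algebra_simps)
  also have "\<dots> = (t ^ des_wrt (<) u * q ^ maj_wrt (<) u) * (\<Prod>i=1..length u. 1 + t * q ^ i)"
    using \<open>0 < length u\<close> by (cases "length u") (auto simp: prod.cl_ivl_Suc mult.assoc)
  finally show ?thesis .
qed

section \<open>Signed permutations are the signings of permutations\<close>

lemma abs_signed: "length e = length u \<Longrightarrow> map abs (signed e u) = map int u"
  by (induction e u rule: list_induct2) (auto simp: signed_def sign_letter_def)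

lemma unsigned_signed: "length e = length u \<Longrightarrow> map (nat \<circ> abs) (signed e u) = u"
  by (induction e u rule: list_induct2) (auto simp: signed_def sign_letter_def)

lemma signs_signed:
  "length e = length u \<Longrightarrow> \<forall>x\<in>set u. 0 < x \<Longrightarrow> map (\<lambda>x. x < 0) (signed e u) = e"
  by (induction e u rule: list_induct2) (auto simp: signed_def sign_letter_def)

lemma signed_decompose:
  "\<forall>x\<in>set w. x \<noteq> 0 \<Longrightarrow> signed (map (\<lambda>x. x < 0) w) (map (nat \<circ> abs) w) = w"
  by (induction w) (auto simp: signed_def sign_letter_def)

lemma Sn_pos: "u \<in> Sn n \<Longrightarrow> \<forall>x\<in>set u. 0 < x"
  by (auto simp: Sn_def)

lemma nat_image_interval: "nat ` {1..int n} = {1..n}"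
proof (rule set_eqI, rule iffI)
  fix x assume "x \<in> {1..n}"
  then show "x \<in> nat ` {1..int n}" by (intro image_eqI[of _ _ "int x"]) auto
qed auto

lemma int_image_interval: "int ` {1..n} = {1..int n}"
proof (rule set_eqI, rule iffI)
  fix x assume "x \<in> {1..int n}"
  then show "x \<in> int ` {1..n}" by (intro image_eqI[of _ _ "nat x"]) auto
qed auto

lemma Bn_eq_signed_Sn:
  "Bn n = (\<lambda>(u, e). signed e u) ` (Sn n \<times> {e. length e = n})"
proof (rule set_eqI, rule iffI)
  fix w assume w: "w \<in> Bn n"
  have nonzero: "\<forall>x\<in>set w. x \<noteq> 0"
  proof
    fix x assume "x \<in> set w"
    then have "\<bar>x\<bar> \<in> set (map abs w)" by simp
    then show "x \<noteq> 0" using w by (auto simp: Bn_def)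
  qed
  have "set (map (nat \<circ> abs) w) = nat ` set (map abs w)" by auto
  then have "set (map (nat \<circ> abs) w) = {1..n}"
    using w by (simp add: Bn_def nat_image_interval)
  moreover have "distinct (map nat (map abs w))"
    using w unfolding Bn_def by (auto simp: distinct_map inj_on_def)
  ultimately have "map (nat \<circ> abs) w \<in> Sn n"
    using w by (simp add: Sn_def Bn_def)
  then show "w \<in> (\<lambda>(u, e). signed e u) ` (Sn n \<times> {e. length e = n})"
    using w signed_decompose[OF nonzero]
    by (intro image_eqI[of _ _ "(map (nat \<circ> abs) w, map (\<lambda>x. x < 0) w)"]) (auto simp: Bn_def)
next
  fix w assume "w \<in> (\<lambda>(u, e). signed e u) ` (Sn n \<times> {e. length e = n})"
  then obtain u e where u: "u \<in> Sn n" and e: "length e = n" and w: "w = signed e u" by auto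
  have len: "length e = length u" using u e by (simp add: Sn_def)
  show "w \<in> Bn n"
    unfolding Bn_def mem_Collect_eq w abs_signed[OF len]
    using u length_signed[OF len] int_image_interval[of n]
    by (simp add: Sn_def distinct_map)
qed

lemma signed_injective:
  assumes len: "length e = length u" "length e' = length u'"
    and pos: "\<forall>x\<in>set u. 0 < x" "\<forall>x\<in>set u'. 0 < x"
    and eq: "signed e u = signed e' u'"
  shows "u = u' \<and> e = e'"
proof
  show "u = u'" using unsigned_signed[OF len(1)] unsigned_signed[OF len(2)] eq by metis
  show "e = e'" using signs_signed[OF len(1) pos(1)] signs_signed[OF len(2) pos(2)] eq by metis
qed

lemma inj_on_signed:
  "inj_on (\<lambda>(u, e). signed e u) (Sn n \<times> {e. length e = n})"
proof (rule inj_onI, clarify)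
  fix u e u' e'
  assume u: "u \<in> Sn (length e)" and u': "u' \<in> Sn (length e)" and "length e' = length e"
    and eq: "signed e u = signed e' u'"
  then have "length e = length u" "length e' = length u'"
    by (simp_all add: Sn_def)
  from signed_injective[OF this Sn_pos[OF u] Sn_pos[OF u'] eq]
  show "u = u' \<and> e = e'" .
qed

theorem theorem5:
  fixes t q :: "'a :: comm_ring_1" and n :: nat
  assumes "n \<ge> 1"
  shows "(\<Sum>w\<in>Bn n. t ^ fdes w * q ^ fmaj w)
       = (\<Sum>u\<in>Sn n. t ^ des_wrt (<) u * q ^ maj_wrt (<) u) * (\<Prod>i=1..n. 1 + t * q ^ i)"
proof -
  have signings: "(\<Sum>e\<in>{e. length e = n}. weight t q e u) =
      (t ^ des_wrt (<) u * q ^ maj_wrt (<) u) * (\<Prod>i=1..n. 1 + t * q ^ i)" if "u \<in> Sn n" for u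
  proof -
    have "length u = n" using that by (simp add: Sn_def)
    moreover from this have "u \<noteq> []" using assms by auto
    ultimately show ?thesis
      using sum_weight_signings[OF _ Sn_pos[OF that], of t q] by simp
  qed
  have "(\<Sum>w\<in>Bn n. t ^ fdes w * q ^ fmaj w) = (\<Sum>(u, e)\<in>Sn n \<times> {e. length e = n}. weight t q e u)"
    unfolding Bn_eq_signed_Sn
    by (subst sum.reindex[OF inj_on_signed]) (simp add: weight_def case_prod_beta)
  also have "\<dots> = (\<Sum>u\<in>Sn n. \<Sum>e\<in>{e. length e = n}. weight t q e u)"
    by (rule sum.cartesian_product[symmetric])
  also have "\<dots> = (\<Sum>u\<in>Sn n. t ^ des_wrt (<) u * q ^ maj_wrt (<) u) * (\<Prod>i=1..n. 1 + t * q ^ i)"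
    by (simp add: signings sum_distrib_right)
  finally show ?thesis .
qed

end
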